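(* Let $\mathcal H$ be a real Hilbert space with inner product $\langle\cdot,\cdot\rangle$ and norm $\|\cdot\|$. Let $A, L_1, L_2$ be bounded linear operators on $\mathcal H$ and $b\in\mathcal H$, and define $$E(u)=\tfrac12\|Au-b\|^2,\qquad J_i(\mu)=\tfrac12\|L_i\mu\|^2\ (i=1,2),\qquad J(\mu)=J_1(\mu)-J_2(\mu),$$ where it is assumed that there is a bounded linear operator $L$ on $\mathcal H$ with $L^*L=L_1^*L_1-L_2^*L_2$, so that $J(\mu)=\tfrac12\|L\mu\|^2$. Fix $\delta t>0$. Let $(u^n,\mu^n,r^n)_{n\ge 0}\subset \mathcal H\times\mathcal H\times\mathbb R$ be a sequence satisfying, for every $n\ge0$ (with $J_2(\mu^n)>0$ so that the scheme is defined), $$\begin{cases}\dfrac{u^{n+1}-u^n}{\delta t} = -L_1^*L_1\mu^{n+1}+\dfrac{r^{n+1}}{\sqrt{J_2(\mu^n)}}\,L_2^*L_2\mu^n,\\[2mm] r^{n+1}-r^n=\dfrac{1}{2\sqrt{J_2(\mu^n)}}\langle L_2\mu^n, L_2(\mu^{n+1}-\mu^n)\rangle,\\[2mm] \mu^{n+1}=\nabla E(u^{n+1}),\end{cases}$$ with initial data satisfying $\mu^0=\nabla E(u^0)$ and $r^0=\sqrt{J_2(\mu^0)}$. Then: (i) for every $n\in\mathbb N$, if $r^{n+1}\ge 0$ then $E(u^{n+1})\le E(u^n)$; (ii) the functional $\tilde J(\mu,r):=\tfrac12\|L_1\mu\|^2-r^2$ satisfies $\tilde J(\mu^{n+1},r^{n+1})\le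 \tilde J(\mu^n,r^n)$ for every $n\in\mathbb N$.
   Context: $L_i^*$ denotes the Hilbert adjoint of $L_i$; $\nabla E(u)=A^*(Au-b)$ is the gradient of $E$ in $\mathcal H$. This is the first-order "mobility SAV" scheme for the gradient flow $u_t=-\nabla J(\mu)$, $\mu=\nabla E(u)$, where the scalar auxiliary variable $r$ approximates $\sqrt{J_2(\mu)}$. *)

theory Defs
  imports "HOL-Analysis.Analysis"
begin

definition energyE :: "('a::real_inner \<Rightarrow> 'a) \<Rightarrow> 'a \<Rightarrow> 'a \<Rightarrow> real" where
  "energyE A b u = (1/2) * (norm (A u - b))\<^sup>2"

definition quadJ :: "('a::real_inner \<Rightarrow> 'a) \<Rightarrow> 'a \<Rightarrow> real" where
  "quadJ L \<mu> = (1/2) * (norm (L \<mu>))\<^sup>2"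

definition gradE :: "('a::real_inner \<Rightarrow> 'a) \<Rightarrow> 'a \<Rightarrow> 'a \<Rightarrow> 'a" where
  "gradE A b u = adjoint A (A u - b)"

definition Jtilde :: "('a::real_inner \<Rightarrow> 'a) \<Rightarrow> 'a \<Rightarrow> real \<Rightarrow> real" where
  "Jtilde L1 \<mu> r = (1/2) * (norm (L1 \<mu>))\<^sup>2 - r\<^sup>2"

end

theory Submission
  imports Defs
begin

text \<open>
  Write s n = \<surd>J2 (\<mu> n) and let q n be the tangent approximation of \<surd>J2 at \<mu> n, evaluated
  at \<mu> (n+1). The r-equation says r (n+1) - q n = r n - s n, and q n \<le> s (n+1) by
  Cauchy-Schwarz (\<surd>J2 is a seminorm), so r 0 = s 0 gives r n \<le> s n and r (n+1) \<le> q n \<le> s (n+1).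

  (i) E is quadratic, so
  E (u n) = E (u (n+1)) - <\<mu> (n+1), u (n+1) - u n> + |A (u (n+1) - u n)|^2 / 2.
  Testing the u-equation with \<mu> (n+1) gives
  <\<mu> (n+1), u (n+1) - u n> = \<delta>t (2 r (n+1) q n - |L1 \<mu> (n+1)|^2), and for r (n+1) \<ge> 0
  we have 2 r (n+1) q n \<le> 2 s (n+1)^2 = |L2 \<mu> (n+1)|^2 \<le> |L1 \<mu> (n+1)|^2.

  (ii) The gradient of E is monotone: <\<mu> (n+1) - \<mu> n, u (n+1) - u n> = |A (u (n+1) - u n)|^2.
  Testing the u-equation with \<mu> (n+1) - \<mu> n and inserting the r-equation therefore yields
  <L1 \<mu> (n+1), L1 (\<mu> (n+1) - \<mu> n)> \<le> 2 r (n+1) (r (n+1) - r n). Polarising both sides, the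
  change of Jtilde is bounded by (r (n+1) - r n)^2 - |L1 (\<mu> (n+1) - \<mu> n)|^2 / 2, which is
  \<le> 0 by Cauchy-Schwarz applied to the r-equation.
\<close>

lemma norm_diff_sq_le_of_convex_lower_bound:
  fixes S :: "'a::real_inner set"
  assumes "convex S" and lower: "\<And>w. w \<in> S \<Longrightarrow> d \<le> (norm w)\<^sup>2" and "x \<in> S" "y \<in> S"
  shows "(norm (x - y))\<^sup>2 \<le> 2 * (norm x)\<^sup>2 + 2 * (norm y)\<^sup>2 - 4 * d"
proof -
  have "(1/2) *\<^sub>R x + (1/2) *\<^sub>R y \<in> S"
    using assms(1,3,4) by (rule convexD) auto
  then have "d \<le> (norm ((1/2) *\<^sub>R (x + y)))\<^sup>2"
    by (metis lower scaleR_right_distrib)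
  then have "4 * d \<le> (norm (x + y))\<^sup>2"
    by (simp add: power_divide)
  moreover have "(norm (x - y))\<^sup>2 + (norm (x + y))\<^sup>2 = 2 * (norm x)\<^sup>2 + 2 * (norm y)\<^sup>2"
    by (simp add: power2_norm_eq_inner algebra_simps inner_commute)
  ultimately show ?thesis
    by linarith
qed

lemma closed_convex_min_norm_exists:
  fixes S :: "'a::{real_inner,complete_space} set"
  assumes "closed S" "convex S" "S \<noteq> {}"
  obtains z where "z \<in> S" "\<And>x. x \<in> S \<Longrightarrow> norm z \<le> norm x"
proof -
  define d where "d = (INF x\<in>S. (norm x)\<^sup>2)"
  have bdd: "bdd_below ((\<lambda>x. (norm x)\<^sup>2) ` S)"
    by (rule bdd_belowI2[of _ 0]) simp
  have d_le: "d \<le> (norm x)\<^sup>2" if "x \<in> S" for x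
    unfolding d_def using bdd that by (rule cINF_lower)
  have "\<exists>x\<in>S. (norm x)\<^sup>2 < d + 1 / Suc n" for n
    using cINF_less_iff[OF assms(3) bdd, of "d + 1 / Suc n"] by (simp add: d_def)
  then obtain X where X_in: "\<And>n. X n \<in> S" and X_norm: "\<And>n. (norm (X n))\<^sup>2 < d + 1 / Suc n"
    by metis
  have X_dist: "(norm (X m - X n))\<^sup>2 \<le> 2 / Suc m + 2 / Suc n" for m n
    using norm_diff_sq_le_of_convex_lower_bound[OF assms(2) d_le X_in X_in, of m n]
      X_norm[of m] X_norm[of n] by simp
  have "Cauchy X"
  proof (rule CauchyI)
    fix e :: real
    assume "0 < e"
    then obtain M where M: "inverse (real (Suc M)) < e\<^sup>2 / 4"
      using reals_Archimedean[of "e\<^sup>2 / 4"] by auto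
    have "norm (X m - X n) < e" if "M \<le> m" "M \<le> n" for m n
    proof -
      have "1 / real (Suc m) \<le> 1 / Suc M" "1 / real (Suc n) \<le> 1 / Suc M"
        using that by (auto intro!: divide_left_mono)
      then have "(norm (X m - X n))\<^sup>2 < e\<^sup>2"
        using X_dist[of m n] M by (simp add: inverse_eq_divide)
      then show ?thesis
        using \<open>0 < e\<close> by (auto intro: power2_less_imp_less)
    qed
    then show "\<exists>M. \<forall>m\<ge>M. \<forall>n\<ge>M. norm (X m - X n) < e"
      by blast
  qed
  then obtain z where X_lim: "X \<longlonglongrightarrow> z"
    using Cauchy_convergent_iff convergent_def by blast
  have "(norm z)\<^sup>2 \<le> d"
  proof (rule LIMSEQ_le)
    show "(\<lambda>n. (norm (X n))\<^sup>2) \<longlonglongrightarrow> (norm z)\<^sup>2"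
      by (intro tendsto_intros X_lim)
    show "(\<lambda>n. d + 1 / Suc n) \<longlonglongrightarrow> d"
      using tendsto_add[OF tendsto_const LIMSEQ_Suc[OF lim_inverse_n']] by simp
    show "\<exists>N. \<forall>n\<ge>N. (norm (X n))\<^sup>2 \<le> d + 1 / Suc n"
      using X_norm less_imp_le by blast
  qed
  then show thesis
    using that closed_sequentially[OF assms(1) X_in X_lim] d_le
    by (meson norm_ge_zero order_trans power2_le_imp_le)
qed

lemma inner_eq_0_if_norm_min_on_line:
  fixes z y :: "'a::real_inner"
  assumes min: "\<And>t. norm z \<le> norm (z + t *\<^sub>R y)"
  shows "inner z y = 0"
proof (cases "y = 0")
  case False
  define t where "t = - inner z y / (norm y)\<^sup>2"
  have "(norm z)\<^sup>2 \<le> (norm (z + t *\<^sub>R y))\<^sup>2"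
    using min by (simp add: power_mono)
  also have "\<dots> = (norm z)\<^sup>2 + 2 * t * inner z y + t\<^sup>2 * (norm y)\<^sup>2"
    unfolding power2_norm_eq_inner
    by (simp add: inner_add_left inner_add_right inner_commute power2_eq_square algebra_simps)
  also have "\<dots> = (norm z)\<^sup>2 - (inner z y)\<^sup>2 / (norm y)\<^sup>2"
    using False by (simp add: t_def field_simps power2_eq_square)
  finally have "(inner z y)\<^sup>2 / (norm y)\<^sup>2 \<le> 0"
    by simp
  then show ?thesis
    using False by (simp add: divide_le_0_iff)
qed simp

text \<open>\<^const>\<open>adjoint\<close> is a choice operator whose defining property HOL-Analysis establishes
  only on Euclidean spaces; on a Hilbert space it follows from the Riesz representation theorem.\<close>

lemma riesz_representation:
  fixes \<phi> :: "'a::{real_inner,complete_space} \<Rightarrow> real"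
  assumes "bounded_linear \<phi>"
  obtains z where "\<And>x. \<phi> x = inner z x"
proof (cases "\<forall>x. \<phi> x = 0")
  case True
  then show thesis
    using that[of 0] by simp
next
  case False
  interpret bounded_linear \<phi> by fact
  define S where "S = {x. \<phi> x = 1}"
  obtain w where "\<phi> w \<noteq> 0"
    using False by blast
  then have "(1 / \<phi> w) *\<^sub>R w \<in> S"
    by (simp add: S_def scale)
  moreover have "closed S"
    unfolding S_def by (intro closed_Collect_eq linear_continuous_on continuous_on_const) fact
  moreover have "convex S"
    by (rule convexI) (auto simp: S_def add scale)
  ultimately obtain z where "z \<in> S" and z_min: "\<And>x. x \<in> S \<Longrightarrow> norm z \<le> norm x"
    using closed_convex_min_norm_exists by blast
  then have z1: "\<phi> z = 1"
    by (simp add: S_def)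
  have ker_orth: "inner z y = 0" if "\<phi> y = 0" for y
    using z1 that by (intro inner_eq_0_if_norm_min_on_line z_min) (simp add: S_def add scale)
  have "\<phi> x = inner ((1 / inner z z) *\<^sub>R z) x" for x
  proof -
    have "inner z (x - \<phi> x *\<^sub>R z) = 0"
      using z1 by (intro ker_orth) (simp add: diff scale)
    then have "inner z x = \<phi> x * inner z z"
      by (simp add: inner_diff_right)
    moreover have "inner z z \<noteq> 0"
      using z1 zero by auto
    ultimately show ?thesis
      by simp
  qed
  then show thesis
    by (rule that)
qed

lemma adjoint_works_hilbert:
  fixes f :: "'a::{real_inner,complete_space} \<Rightarrow> 'b::real_inner"
  assumes "bounded_linear f"
  shows "inner x (adjoint f y) = inner (f x) y"
proof -
  have "\<forall>y. \<exists>w. \<forall>x. inner (f x) y = inner x w"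
  proof
    fix y
    have "bounded_linear (\<lambda>x. inner (f x) y)"
      using bounded_linear_compose[OF bounded_linear_inner_left assms] .
    then obtain w where "\<And>x. inner (f x) y = inner w x"
      using riesz_representation by blast
    then show "\<exists>w. \<forall>x. inner (f x) y = inner x w"
      by (metis inner_commute)
  qed
  then show ?thesis
    unfolding adjoint_def choice_iff
    by (intro someI2_ex[where Q="\<lambda>f'. inner x (f' y) = inner (f x) y"]) auto
qed

lemma norm_sq_eq_of_adjoint_identity:
  fixes L L1 L2 :: "'a::{real_inner,complete_space} \<Rightarrow> 'b::real_inner"
  assumes "bounded_linear L" "bounded_linear L1" "bounded_linear L2"
    and "\<And>x. adjoint L (L x) = adjoint L1 (L1 x) - adjoint L2 (L2 x)"
  shows "(norm (L x))\<^sup>2 = (norm (L1 x))\<^sup>2 - (norm (L2 x))\<^sup>2"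
proof -
  have "(norm (L x))\<^sup>2 = inner x (adjoint L (L x))"
    by (simp add: adjoint_works_hilbert[OF assms(1)] power2_norm_eq_inner)
  also have "\<dots> = (norm (L1 x))\<^sup>2 - (norm (L2 x))\<^sup>2"
    by (simp add: assms(4) inner_diff_right adjoint_works_hilbert[OF assms(2)]
        adjoint_works_hilbert[OF assms(3)] power2_norm_eq_inner)
  finally show ?thesis .
qed

lemma energyE_expansion:
  fixes A :: "'a::{real_inner,complete_space} \<Rightarrow> 'a"
  assumes "bounded_linear A"
  shows "energyE A b x
    = energyE A b y - inner (gradE A b y) (y - x) + (1/2) * (norm (A (y - x)))\<^sup>2"
proof -
  interpret A: bounded_linear A by fact
  have "A x - b = (A y - b) - A (y - x)"
    by (simp add: A.diff)
  moreover have "inner (gradE A b y) (y - x) = inner (A (y - x)) (A y - b)"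
    by (simp add: gradE_def inner_commute[of "adjoint A _"] adjoint_works_hilbert[OF assms])
  ultimately show ?thesis
    unfolding energyE_def power2_norm_eq_inner
    by (simp add: inner_diff_left inner_diff_right inner_commute)
qed

lemma inner_gradE_diff:
  fixes A :: "'a::{real_inner,complete_space} \<Rightarrow> 'a"
  assumes "bounded_linear A"
  shows "inner (gradE A b y - gradE A b x) (y - x) = (norm (A (y - x)))\<^sup>2"
proof -
  interpret A: bounded_linear A by fact
  show ?thesis
    by (simp add: gradE_def inner_diff_left inner_diff_right inner_commute[of "adjoint A _"]
        adjoint_works_hilbert[OF assms] A.diff power2_norm_eq_inner)
qed

locale mobility_sav_scheme =
  fixes A L1 L2 :: "'a::{real_inner,complete_space} \<Rightarrow> 'a"
    and b :: 'a and dt :: real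
    and u \<mu> :: "nat \<Rightarrow> 'a" and r :: "nat \<Rightarrow> real"
  assumes A: "bounded_linear A" and L1: "bounded_linear L1" and L2: "bounded_linear L2"
    and norm_L2_le_L1: "\<And>x. norm (L2 x) \<le> norm (L1 x)"
    and dt_pos: "dt > 0"
    and quadJ_L2_pos: "\<And>n. quadJ L2 (\<mu> n) > 0"
    and u_step: "\<And>n. (u (Suc n) - u n) /\<^sub>R dt =
            - adjoint L1 (L1 (\<mu> (Suc n)))
            + (r (Suc n) / sqrt (quadJ L2 (\<mu> n))) *\<^sub>R adjoint L2 (L2 (\<mu> n))"
    and r_step: "\<And>n. r (Suc n) - r n =
            (1 / (2 * sqrt (quadJ L2 (\<mu> n)))) * inner (L2 (\<mu> n)) (L2 (\<mu> (Suc n) - \<mu> n))"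
    and \<mu>_eq: "\<And>n. \<mu> n = gradE A b (u n)"
    and r_0: "r 0 = sqrt (quadJ L2 (\<mu> 0))"
begin

interpretation L1: bounded_linear L1 by (fact L1)
interpretation L2: bounded_linear L2 by (fact L2)

definition sqrtJ2 :: "nat \<Rightarrow> real" where
  "sqrtJ2 n = sqrt (quadJ L2 (\<mu> n))"

text \<open>This equals s n + <L2 (\<mu> n), L2 (\<mu> (n+1) - \<mu> n)> / (2 s n) with s = sqrtJ2, the tangent
  approximation of \<surd>J2 at \<mu> n evaluated at \<mu> (n+1).\<close>

definition sqrtJ2_tangent :: "nat \<Rightarrow> real" where
  "sqrtJ2_tangent n = inner (L2 (\<mu> n)) (L2 (\<mu> (Suc n))) / (2 * sqrtJ2 n)"

lemma sqrtJ2_pos: "0 < sqrtJ2 n"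
  using quadJ_L2_pos by (simp add: sqrtJ2_def)

lemma norm_L2_\<mu>: "norm (L2 (\<mu> n)) = sqrt 2 * sqrtJ2 n"
  by (simp add: sqrtJ2_def quadJ_def flip: real_sqrt_mult)

lemma norm_L2_\<mu>_sq: "(norm (L2 (\<mu> n)))\<^sup>2 = 2 * (sqrtJ2 n)\<^sup>2"
  by (simp add: norm_L2_\<mu> power_mult_distrib)

lemma r_Suc_eq: "r (Suc n) = r n - sqrtJ2 n + sqrtJ2_tangent n"
proof -
  have "r (Suc n) - r n = (inner (L2 (\<mu> n)) (L2 (\<mu> (Suc n))) - 2 * (sqrtJ2 n)\<^sup>2) / (2 * sqrtJ2 n)"
    using r_step[of n] norm_L2_\<mu>_sq[of n]
    by (simp add: sqrtJ2_def L2.diff inner_diff_right power2_norm_eq_inner)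
  then show ?thesis
    using sqrtJ2_pos[of n] by (simp add: sqrtJ2_tangent_def diff_divide_distrib power2_eq_square)
qed

lemma sqrtJ2_tangent_le: "sqrtJ2_tangent n \<le> sqrtJ2 (Suc n)"
proof -
  have "inner (L2 (\<mu> n)) (L2 (\<mu> (Suc n))) \<le> norm (L2 (\<mu> n)) * norm (L2 (\<mu> (Suc n)))"
    by (rule norm_cauchy_schwarz)
  also have "\<dots> = 2 * sqrtJ2 n * sqrtJ2 (Suc n)"
    by (simp add: norm_L2_\<mu>)
  finally show ?thesis
    using sqrtJ2_pos[of n] by (simp add: sqrtJ2_tangent_def pos_divide_le_eq mult_ac)
qed

lemma r_le_sqrtJ2: "r n \<le> sqrtJ2 n"
proof (induction n)
  case 0
  then show ?case
    by (simp add: r_0 sqrtJ2_def)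
next
  case (Suc n)
  then show ?case
    using r_Suc_eq[of n] sqrtJ2_tangent_le[of n] by linarith
qed

lemma r_Suc_le_tangent: "r (Suc n) \<le> sqrtJ2_tangent n"
  using r_Suc_eq[of n] r_le_sqrtJ2[of n] by linarith

lemma inner_u_step:
  "inner x (u (Suc n) - u n) = dt * (r (Suc n) / sqrtJ2 n * inner (L2 x) (L2 (\<mu> n))
     - inner (L1 x) (L1 (\<mu> (Suc n))))"
proof -
  have "u (Suc n) - u n = dt *\<^sub>R ((u (Suc n) - u n) /\<^sub>R dt)"
    using dt_pos by simp
  also note u_step
  finally have step: "u (Suc n) - u n = dt *\<^sub>R (- adjoint L1 (L1 (\<mu> (Suc n)))
      + (r (Suc n) / sqrtJ2 n) *\<^sub>R adjoint L2 (L2 (\<mu> n)))"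
    by (simp only: sqrtJ2_def)
  show ?thesis
    unfolding step
    by (simp add: inner_add_right adjoint_works_hilbert[OF L1] adjoint_works_hilbert[OF L2]
        algebra_simps)
qed

theorem energy_decreasing:
  assumes "0 \<le> r (Suc n)"
  shows "energyE A b (u (Suc n)) \<le> energyE A b (u n)"
proof -
  have "r (Suc n) / sqrtJ2 n * inner (L2 (\<mu> (Suc n))) (L2 (\<mu> n)) = 2 * r (Suc n) * sqrtJ2_tangent n"
    using sqrtJ2_pos[of n] by (simp add: sqrtJ2_tangent_def inner_commute)
  also have "\<dots> \<le> 2 * (sqrtJ2 (Suc n))\<^sup>2"
    using assms r_Suc_le_tangent[of n] sqrtJ2_tangent_le[of n]
    by (simp add: power2_eq_square mult_mono)
  also have "\<dots> \<le> (norm (L1 (\<mu> (Suc n))))\<^sup>2"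
    using norm_L2_\<mu>_sq[of "Suc n"] norm_L2_le_L1 by (metis norm_ge_zero power_mono)
  finally have "inner (\<mu> (Suc n)) (u (Suc n) - u n) \<le> 0"
    using dt_pos by (simp add: inner_u_step power2_norm_eq_inner mult_le_0_iff)
  moreover have "energyE A b (u n) = energyE A b (u (Suc n)) - inner (\<mu> (Suc n)) (u (Suc n) - u n)
      + (1/2) * (norm (A (u (Suc n) - u n)))\<^sup>2"
    using energyE_expansion[OF A, of b "u n" "u (Suc n)"] by (simp add: \<mu>_eq)
  ultimately show ?thesis
    using zero_le_power2[of "norm (A (u (Suc n) - u n))"] by linarith
qed

lemma r_increment: "2 * sqrtJ2 n * (r (Suc n) - r n) = inner (L2 (\<mu> n)) (L2 (\<mu> (Suc n) - \<mu> n))"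
  using r_step[of n] sqrtJ2_pos[of n] by (simp add: sqrtJ2_def)

lemma r_increment_sq_le: "(r (Suc n) - r n)\<^sup>2 \<le> (1/2) * (norm (L1 (\<mu> (Suc n) - \<mu> n)))\<^sup>2"
proof -
  let ?d = "\<mu> (Suc n) - \<mu> n"
  have "(2 * sqrtJ2 n * (r (Suc n) - r n))\<^sup>2 \<le> (norm (L2 (\<mu> n)))\<^sup>2 * (norm (L2 ?d))\<^sup>2"
    unfolding r_increment power2_norm_eq_inner by (rule Cauchy_Schwarz_ineq)
  then have "(r (Suc n) - r n)\<^sup>2 \<le> (1/2) * (norm (L2 ?d))\<^sup>2"
    using sqrtJ2_pos[of n] by (simp add: norm_L2_\<mu>_sq power_mult_distrib)
  also have "\<dots> \<le> (1/2) * (norm (L1 ?d))\<^sup>2"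
    using norm_L2_le_L1 by (simp add: power_mono)
  finally show ?thesis .
qed

lemma inner_L1_step_le:
  "inner (L1 (\<mu> (Suc n))) (L1 (\<mu> (Suc n) - \<mu> n)) \<le> 2 * r (Suc n) * (r (Suc n) - r n)"
proof -
  let ?d = "\<mu> (Suc n) - \<mu> n"
  have "0 \<le> inner ?d (u (Suc n) - u n)"
    using inner_gradE_diff[OF A, of b "u (Suc n)" "u n"] by (simp add: \<mu>_eq)
  also have "\<dots> = dt * (2 * r (Suc n) * (r (Suc n) - r n) - inner (L1 (\<mu> (Suc n))) (L1 ?d))"
    using sqrtJ2_pos[of n]
    by (simp add: inner_u_step inner_commute[of "L2 ?d"] inner_commute[of "L1 ?d"]
        flip: r_increment)
  finally show ?thesis
    using dt_pos by (simp add: zero_le_mult_iff)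
qed

theorem modified_energy_decreasing: "Jtilde L1 (\<mu> (Suc n)) (r (Suc n)) \<le> Jtilde L1 (\<mu> n) (r n)"
proof -
  let ?p = "L1 (\<mu> (Suc n))"
  let ?p_prev = "L1 (\<mu> n)"
  have "2 * inner ?p (?p - ?p_prev) = (norm ?p)\<^sup>2 - (norm ?p_prev)\<^sup>2 + (norm (?p - ?p_prev))\<^sup>2"
    unfolding power2_norm_eq_inner by (simp add: inner_diff_left inner_diff_right inner_commute)
  moreover have "2 * r (Suc n) * (r (Suc n) - r n) = (r (Suc n))\<^sup>2 - (r n)\<^sup>2 + (r (Suc n) - r n)\<^sup>2"
    by (simp add: power2_eq_square algebra_simps)
  ultimately show ?thesis
    using inner_L1_step_le[of n] r_increment_sq_le[of n]
    unfolding Jtilde_def L1.diff by linarith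
qed

end

theorem proposition3p1:
  fixes A L1 L2 L :: "'a::{real_inner, complete_space} \<Rightarrow> 'a"
    and b :: 'a and dt :: real
    and u \<mu> :: "nat \<Rightarrow> 'a" and r :: "nat \<Rightarrow> real"
  assumes "bounded_linear A" "bounded_linear L1" "bounded_linear L2" "bounded_linear L"
    and "\<And>x. adjoint L (L x) = adjoint L1 (L1 x) - adjoint L2 (L2 x)"
    and "dt > 0"
    and "\<And>n. quadJ L2 (\<mu> n) > 0"
    and "\<And>n. (u (Suc n) - u n) /\<^sub>R dt =
            - adjoint L1 (L1 (\<mu> (Suc n)))
            + (r (Suc n) / sqrt (quadJ L2 (\<mu> n))) *\<^sub>R adjoint L2 (L2 (\<mu> n))"
    and "\<And>n. r (Suc n) - r n =
            (1 / (2 * sqrt (quadJ L2 (\<mu> n)))) * inner (L2 (\<mu> n)) (L2 (\<mu> (Suc n) - \<mu> n))"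
    and "\<And>n. \<mu> (Suc n) = gradE A b (u (Suc n))"
    and "\<mu> 0 = gradE A b (u 0)"
    and "r 0 = sqrt (quadJ L2 (\<mu> 0))"
  shows "(\<forall>n. r (Suc n) \<ge> 0 \<longrightarrow> energyE A b (u (Suc n)) \<le> energyE A b (u n))
       \<and> (\<forall>n. Jtilde L1 (\<mu> (Suc n)) (r (Suc n)) \<le> Jtilde L1 (\<mu> n) (r n))"
proof -
  have norm_L2_le_L1: "norm (L2 x) \<le> norm (L1 x)" for x
  proof -
    have "(norm (L2 x))\<^sup>2 \<le> (norm (L1 x))\<^sup>2"
      using norm_sq_eq_of_adjoint_identity[OF assms(4,2,3,5), of x]
        zero_le_power2[of "norm (L x)"] by linarith
    then show ?thesis
      by (rule power2_le_imp_le) simp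
  qed
  have \<mu>_eq: "\<mu> n = gradE A b (u n)" for n
    using assms(10,11) by (cases n) simp_all
  interpret mobility_sav_scheme A L1 L2 b dt u \<mu> r
    using assms(1-3) norm_L2_le_L1 assms(6-9) \<mu>_eq assms(12)
    by (rule mobility_sav_scheme.intro)
  show ?thesis
    using energy_decreasing modified_energy_decreasing by blast
qed

end
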